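(* Let $\Lambda=(\mathcal{L}\subset\mathbb{R}^s,\mathbb{R}^n)$ be a generic cut-and-project scheme with associated matrix $L$, and let $A\in\mathbb{R}^{n\times n}$ be a non-singular matrix diagonalizable over $\mathbb{C}$ which is a self-similarity of $\Lambda$, with $B\in\mathbb{R}^{(s-n)\times(s-n)}$, $C\in\mathbb{Z}^{s\times s}$ the (unique) matrices such that $\begin{pmatrix}A&O\\O&B\end{pmatrix}L=LC$. Let $\Omega\subset\mathbb{R}^{s-n}$ be bounded with $\overline{\Omega^\circ}=\overline{\Omega}$. Then: (i) if $B\Omega\subset\Omega$, then $A\Sigma(\Omega)\subset\Sigma(\Omega)$; (ii) if $A\Sigma(\Omega)\subset\Sigma(\Omega)$, then $B\overline{\Omega}\subset\overline{\Omega}$.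
   Context: A lattice $\mathcal{L}\subset\mathbb{R}^s$ is $\{L\mathbf{r}:\mathbf{r}\in\mathbb{Z}^s\}$ for a non-singular $L\in\mathbb{R}^{s\times s}$. For $1\le n<s$ the scheme $(\mathcal{L}\subset\mathbb{R}^s,\mathbb{R}^n)$ has projections $\pi_\parallel(\mathbf{x})=(x_1,\dots,x_n)^\top$, $\pi_\perp(\mathbf{x})=(x_{n+1},\dots,x_s)^\top$; it is generic if $\pi_\parallel|_{\mathcal{L}}$, $\pi_\perp|_{\mathcal{L}}$ are injective and $\pi_\perp(\mathcal{L})$ is dense in $\mathbb{R}^{s-n}$. $A$ is a self-similarity of a generic scheme if $A\pi_\parallel(\mathcal{L})\subset\pi_\parallel(\mathcal{L})$ and there exist $C\in\mathbb{Z}^{s\times s}$, $B$ real with $\begin{pmatrix}A&O\\O&B\end{pmatrix}L=LC$. The cut-and-project set is $\Sigma(\Omega)=\{\pi_\parallel(\mathbf{l}):\mathbf{l}\in\mathcal{L},\ \pi_\perp(\mathbf{l})\in\Omega\}$. *)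

theory Defs
  imports "HOL-Analysis.Analysis"
begin

text \<open>Ambient space R^s is modelled as real^('n + 'm): the physical space R^n is
  real^'n (coordinates Inl i) and the internal space R^(s-n) is real^'m (coordinates Inr j).\<close>

definition par_proj :: "real^('n::finite + 'm::finite) \<Rightarrow> real^'n" where
  "par_proj x = (\<chi> i. x $ Inl i)"

definition perp_proj :: "real^('n::finite + 'm::finite) \<Rightarrow> real^'m" where
  "perp_proj x = (\<chi> j. x $ Inr j)"

definition int_vec :: "real^'k \<Rightarrow> bool" where
  "int_vec r \<longleftrightarrow> (\<forall>i. r $ i \<in> \<int>)"

definition int_mat :: "real^'k^'l \<Rightarrow> bool" where
  "int_mat C \<longleftrightarrow> (\<forall>i j. C $ i $ j \<in> \<int>)"

definition lattice_of :: "real^'k^'k \<Rightarrow> (real^'k) set" where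
  "lattice_of L = {L *v r | r. int_vec r}"

definition generic_cps :: "real^('n::finite + 'm::finite)^('n + 'm) \<Rightarrow> bool" where
  "generic_cps L \<longleftrightarrow> invertible L
     \<and> inj_on (par_proj :: real^('n + 'm) \<Rightarrow> real^'n) (lattice_of L)
     \<and> inj_on (perp_proj :: real^('n + 'm) \<Rightarrow> real^'m) (lattice_of L)
     \<and> closure ((perp_proj :: real^('n + 'm) \<Rightarrow> real^'m) ` lattice_of L) = UNIV"

definition block_diag :: "real^'n::finite^'n \<Rightarrow> real^'m::finite^'m \<Rightarrow> real^('n + 'm)^('n + 'm)" where
  "block_diag A B = (\<chi> i j. case (i, j) of
      (Inl a, Inl b) \<Rightarrow> A $ a $ b
    | (Inr a, Inr b) \<Rightarrow> B $ a $ b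
    | _ \<Rightarrow> 0)"

definition cps_set :: "real^('n::finite + 'm::finite)^('n + 'm) \<Rightarrow> (real^'m) set \<Rightarrow> (real^'n) set" where
  "cps_set L \<Omega> = {par_proj l | l. l \<in> lattice_of L \<and> perp_proj l \<in> \<Omega>}"

definition diagonalizable_over_C :: "real^'n^'n \<Rightarrow> bool" where
  "diagonalizable_over_C A \<longleftrightarrow>
     (\<exists>(P :: complex^'n^'n) (D :: complex^'n^'n).
        invertible P \<and> (\<forall>i j. i \<noteq> j \<longrightarrow> D $ i $ j = 0)
        \<and> (\<chi> i j. complex_of_real (A $ i $ j)) ** P = P ** D)"

end

theory Submission
  imports Defs
begin

text \<open>The block matrix \<open>M = diag(A, B)\<close> maps the lattice into itself, since \<open>M L = L C\<close>
  with \<open>C\<close> integral, and it acts as \<open>A\<close> on the physical and as \<open>B\<close> on the internal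
  coordinates. Hence \<open>B \<Omega> \<subseteq> \<Omega>\<close> gives \<open>A \<Sigma>(\<Omega>) \<subseteq> \<Sigma>(\<Omega>)\<close> directly. Conversely, injectivity
  of the physical projection on the lattice shows that \<open>B\<close> maps every lattice point of
  \<open>\<Omega>\<close> (in internal coordinates) back into \<open>\<Omega>\<close>; these points are dense in \<open>\<Omega>\<close> because
  \<open>\<Omega>\<close> is the closure of its interior and the projected lattice is dense, so continuity
  of \<open>B\<close> gives \<open>B (closure \<Omega>) \<subseteq> closure \<Omega>\<close>.\<close>

lemma par_proj_block_diag_mult:
  fixes A :: "real^'n::finite^'n" and B :: "real^'m::finite^'m"
  shows "par_proj (block_diag A B *v x) = A *v par_proj x"
  unfolding par_proj_def block_diag_def
  by (simp add: vec_eq_iff matrix_vector_mult_def sum.Plus UNIV_Plus_UNIV[symmetric]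
      del: UNIV_Plus_UNIV)

lemma perp_proj_block_diag_mult:
  fixes A :: "real^'n::finite^'n" and B :: "real^'m::finite^'m"
  shows "perp_proj (block_diag A B *v x) = B *v perp_proj x"
  unfolding perp_proj_def block_diag_def
  by (simp add: vec_eq_iff matrix_vector_mult_def sum.Plus UNIV_Plus_UNIV[symmetric]
      del: UNIV_Plus_UNIV)

lemma int_vec_matrix_vector_mult:
  assumes "int_mat C" and "int_vec r"
  shows "int_vec (C *v r)"
  using assms unfolding int_mat_def int_vec_def matrix_vector_mult_def
  by (auto intro!: Ints_sum Ints_mult)

lemma block_diag_mult_lattice:
  fixes L :: "real^('n::finite + 'm::finite)^('n + 'm)"
  assumes "int_mat C" and "block_diag A B ** L = L ** C" and "l \<in> lattice_of L"
  shows "block_diag A B *v l \<in> lattice_of L"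
proof -
  obtain r where l: "l = L *v r" and r: "int_vec r"
    using assms(3) unfolding lattice_of_def by auto
  have "block_diag A B *v l = L *v (C *v r)"
    using assms(2) by (simp add: l matrix_vector_mul_assoc)
  then show ?thesis
    using int_vec_matrix_vector_mult[OF assms(1) r] unfolding lattice_of_def by auto
qed

lemma cps_set_image_subset:
  fixes L :: "real^('n::finite + 'm::finite)^('n + 'm)"
  assumes "int_mat C" and "block_diag A B ** L = L ** C"
    and "(\<lambda>y. B *v y) ` \<Omega> \<subseteq> \<Omega>"
  shows "(\<lambda>x. A *v x) ` cps_set L \<Omega> \<subseteq> cps_set L \<Omega>"
proof
  fix z assume "z \<in> (\<lambda>x. A *v x) ` cps_set L \<Omega>"
  then obtain l where l: "l \<in> lattice_of L" "perp_proj l \<in> \<Omega>" and z: "z = A *v par_proj l"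
    unfolding cps_set_def by auto
  let ?l = "block_diag A B *v l"
  have "?l \<in> lattice_of L"
    using block_diag_mult_lattice[OF assms(1,2) l(1)] .
  moreover have "z = par_proj ?l"
    by (simp add: z par_proj_block_diag_mult)
  moreover have "perp_proj ?l \<in> \<Omega>"
    using assms(3) l(2) by (auto simp: perp_proj_block_diag_mult)
  ultimately show "z \<in> cps_set L \<Omega>"
    unfolding cps_set_def by blast
qed

lemma image_Int_perp_lattice_subset:
  fixes L :: "real^('n::finite + 'm::finite)^('n + 'm)"
  assumes inj: "inj_on (par_proj :: real^('n + 'm) \<Rightarrow> real^'n) (lattice_of L)"
    and "int_mat C" and "block_diag A B ** L = L ** C"
    and "(\<lambda>x. A *v x) ` cps_set L \<Omega> \<subseteq> cps_set L \<Omega>"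
  shows "(\<lambda>y. B *v y) ` (\<Omega> \<inter> perp_proj ` lattice_of L) \<subseteq> \<Omega>"
proof clarify
  fix l assume l: "l \<in> lattice_of L" "perp_proj l \<in> \<Omega>"
  then have "A *v par_proj l \<in> cps_set L \<Omega>"
    using assms(4) unfolding cps_set_def by blast
  then obtain l' where l': "l' \<in> lattice_of L" "perp_proj l' \<in> \<Omega>"
    and eq: "A *v par_proj l = par_proj l'"
    unfolding cps_set_def by auto
  have "par_proj (block_diag A B *v l) = par_proj l'"
    by (simp add: eq par_proj_block_diag_mult)
  then have "block_diag A B *v l = l'"
    using inj block_diag_mult_lattice[OF assms(2,3) l(1)] l'(1) by (auto dest: inj_onD)
  then show "B *v perp_proj l \<in> \<Omega>"
    using l'(2) by (metis perp_proj_block_diag_mult)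
qed

lemma closure_Int_dense:
  assumes "closure D = UNIV" and "closure (interior S) = closure S"
  shows "closure (S \<inter> D) = closure S"
proof (rule antisym)
  have "interior S \<subseteq> closure (interior S \<inter> D)"
    using open_Int_closure_subset[of "interior S" D] assms(1) by auto
  also have "\<dots> \<subseteq> closure (S \<inter> D)"
    by (intro closure_mono Int_mono interior_subset subset_refl)
  finally show "closure S \<subseteq> closure (S \<inter> D)"
    using assms(2) by (metis closed_closure closure_minimal)
qed (simp add: closure_mono)

lemma image_closure_subset_of_dense:
  assumes "continuous_on (closure S) f" and "closure (S \<inter> D) = closure S"
    and "f ` (S \<inter> D) \<subseteq> S"
  shows "f ` closure S \<subseteq> closure S"
  using image_closure_subset[of "S \<inter> D" f "closure S"] assms closure_subset by auto

theorem proposition9: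
  fixes L :: "real^('n::finite + 'm::finite)^('n + 'm)"
    and A :: "real^'n^'n"
    and B :: "real^'m^'m"
    and C :: "real^('n + 'm)^('n + 'm)"
    and \<Omega> :: "(real^'m) set"
  assumes generic: "generic_cps L"
    and A_nonsing: "invertible A"
    and A_diag: "diagonalizable_over_C A"
    and A_selfsim: "(\<lambda>x. A *v x) ` ((par_proj :: real^('n + 'm) \<Rightarrow> real^'n) ` lattice_of L)
                      \<subseteq> (par_proj :: real^('n + 'm) \<Rightarrow> real^'n) ` lattice_of L"
    and C_int: "int_mat C"
    and block_eq: "block_diag A B ** L = L ** C"
    and \<Omega>_bdd: "bounded \<Omega>"
    and \<Omega>_reg: "closure (interior \<Omega>) = closure \<Omega>"
  shows "((\<lambda>y. B *v y) ` \<Omega> \<subseteq> \<Omega> \<longrightarrow> (\<lambda>x. A *v x) ` cps_set L \<Omega> \<subseteq> cps_set L \<Omega>)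
       \<and> ((\<lambda>x. A *v x) ` cps_set L \<Omega> \<subseteq> cps_set L \<Omega> \<longrightarrow> (\<lambda>y. B *v y) ` closure \<Omega> \<subseteq> closure \<Omega>)"
proof (intro conjI impI)
  show "(\<lambda>x. A *v x) ` cps_set L \<Omega> \<subseteq> cps_set L \<Omega>" if "(\<lambda>y. B *v y) ` \<Omega> \<subseteq> \<Omega>"
    using cps_set_image_subset[OF C_int block_eq that] .
next
  assume A_inv: "(\<lambda>x. A *v x) ` cps_set L \<Omega> \<subseteq> cps_set L \<Omega>"
  have inj: "inj_on (par_proj :: real^('n + 'm) \<Rightarrow> real^'n) (lattice_of L)"
    and dense: "closure ((perp_proj :: real^('n + 'm) \<Rightarrow> real^'m) ` lattice_of L) = UNIV"
    using generic unfolding generic_cps_def by auto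
  show "(\<lambda>y. B *v y) ` closure \<Omega> \<subseteq> closure \<Omega>"
  proof (rule image_closure_subset_of_dense)
    show "continuous_on (closure \<Omega>) (\<lambda>y. B *v y)"
      by (rule matrix_vector_mult_linear_continuous_on)
    show "closure (\<Omega> \<inter> perp_proj ` lattice_of L) = closure \<Omega>"
      using closure_Int_dense[OF dense \<Omega>_reg] .
    show "(\<lambda>y. B *v y) ` (\<Omega> \<inter> perp_proj ` lattice_of L) \<subseteq> \<Omega>"
      using image_Int_perp_lattice_subset[OF inj C_int block_eq A_inv] .
  qed
qed

end
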